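(* Let $G$ be a finite group of order $n$ with $n\not\equiv 1 \pmod 3$. Then the number of transversals of the Cayley table of $G$ is divisible by $3$.
   Context: The Cayley table of a finite group $G$ is the latin square with rows and columns indexed by the elements of $G$ whose entry in row $x$, column $y$ is $xy$. A transversal of a latin square of order $n$ is a set of $n$ cells, one from each row and one from each column, no two containing the same symbol. *)

theory Defs
  imports "HOL-Algebra.Group"
begin

definition cayley_transversal :: "('a, 'b) monoid_scheme \<Rightarrow> ('a \<times> 'a) set \<Rightarrow> bool" where
  "cayley_transversal G T \<longleftrightarrow>
     T \<subseteq> carrier G \<times> carrier G \<and>
     (\<forall>x\<in>carrier G. \<exists>!y. (x, y) \<in> T) \<and>
     (\<forall>y\<in>carrier G. \<exists>!x. (x, y) \<in> T) \<and>
     inj_on (\<lambda>(x, y). x \<otimes>\<^bsub>G\<^esub> y) T"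

definition num_transversals :: "('a, 'b) monoid_scheme \<Rightarrow> nat" where
  "num_transversals G = card {T. cayley_transversal G T}"

end

theory Submission
  imports Defs "HOL-Algebra.Multiplicative_Group" "HOL-Computational_Algebra.Primes"
begin

(* A transversal of the Cayley table is a set T of cells
   (x, y) on which the three coordinate maps "row" (x, y) \<mapsto> x, "column" (x, y) \<mapsto> y and
   "symbol" (x, y) \<mapsto> x y are bijections onto G (lemma transversal_iff_bij).

   Case 3 | n.  For a \<in> G the cell map (x, y) \<mapsto> (x, y a) permutes transversals and sends those
   through the cell (1, y) onto those through (1, y a).  Hence the transversals are partitioned
   into n classes of equal size, and n divides their number (order_dvd_num_transversals).

   Case n \<equiv> 2 (mod 3).  The cell map (x, y) \<mapsto> (y, (x y)\<inverse>) cyclically permutes the coordinates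
   of the triple (x, y, z) with x y z = 1, so it has order 3, and it permutes row, column and
   symbol maps up to inversion; hence it permutes transversals.  Any map of order 3 on a finite
   set fixes as many points as the set has elements, modulo 3 (card_mod_3_eq_fixed_points).
   A fixed cell (x, x) has x\<^sup>3 = 1, forcing x = 1 when 3 does not divide n, so a transversal
   fixed by the map would have n \<equiv> 0 or 1 (mod 3).  Thus no transversal is fixed, and the number of
   transversals is divisible by 3. *)

(* A map of order 3 without fixed points splits a finite set into orbits of size 3. *)
lemma card_dvd_3_if_fixed_point_free_order_3:
  assumes "finite S" "f ` S \<subseteq> S" "\<And>x. x \<in> S \<Longrightarrow> f (f (f x)) = x"
    "\<And>x. x \<in> S \<Longrightarrow> f x \<noteq> x"
  shows "3 dvd card S"
  using assms
proof (induction "card S" arbitrary: S rule: less_induct)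
  case less
  show ?case
  proof (cases "S = {}")
    case True
    then show ?thesis by simp
  next
    case False
    then obtain x where x: "x \<in> S" by blast
    let ?orbit = "{x, f x, f (f x)}"
    have orbit_sub: "?orbit \<subseteq> S" using x less.prems(2) by auto
    have "f x \<noteq> x" "f (f x) \<noteq> f x" using less.prems(2,4) x by auto
    moreover have "f (f x) \<noteq> x"
    proof
      assume "f (f x) = x"
      then have "f (f (f x)) = f x" by simp
      then show False using less.prems(3)[OF x] \<open>f x \<noteq> x\<close> by simp
    qed
    ultimately have card_orbit: "card ?orbit = 3" by simp
    have invariant: "f ` (S - ?orbit) \<subseteq> S - ?orbit"
    proof (rule image_subsetI)
      fix y assume y: "y \<in> S - ?orbit"
      have "f y \<notin> ?orbit"
      proof
        assume "f y \<in> ?orbit"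
        then have "f (f (f y)) \<in> {f (f x), f (f (f x)), f (f (f (f x)))}" by auto
        then show False using y less.prems(3)[of y] less.prems(3)[OF x] by auto
      qed
      moreover have "f y \<in> S" using y less.prems(2) by blast
      ultimately show "f y \<in> S - ?orbit" by blast
    qed
    have "3 \<le> card S"
      using card_mono[OF less.prems(1) orbit_sub] card_orbit by simp
    have card_S: "card S = card (S - ?orbit) + 3"
      using card_Diff_subset[OF finite_subset[OF orbit_sub less.prems(1)] orbit_sub]
        card_orbit \<open>3 \<le> card S\<close> by simp
    have "3 dvd card (S - ?orbit)"
    proof (rule less.hyps)
      show "card (S - ?orbit) < card S" using card_S by simp
      show "finite (S - ?orbit)" using less.prems(1) by simp
      show "f ` (S - ?orbit) \<subseteq> S - ?orbit" by (rule invariant)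
      show "f (f (f y)) = y" if "y \<in> S - ?orbit" for y using that less.prems(3) by simp
      show "f y \<noteq> y" if "y \<in> S - ?orbit" for y using that less.prems(4) by simp
    qed
    then show ?thesis using card_S by simp
  qed
qed

(* For a map of order 3 the non-fixed points form an invariant set without fixed points, so
   the number of points and the number of fixed points agree modulo 3. *)
lemma card_mod_3_eq_fixed_points:
  assumes fin: "finite S" and closed: "f ` S \<subseteq> S"
    and cube: "\<And>x. x \<in> S \<Longrightarrow> f (f (f x)) = x"
  shows "card S mod 3 = card {x \<in> S. f x = x} mod 3"
proof -
  let ?F = "{x \<in> S. f x = x}"
  have invariant: "f y \<in> S - ?F" if "y \<in> S - ?F" for y
  proof -
    have "f y \<in> S" using that closed by blast
    moreover have "f (f y) \<noteq> f y"
    proof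
      assume "f (f y) = f y"
      then have "f (f (f y)) = f y" by simp
      then show False using that cube[of y] by auto
    qed
    ultimately show ?thesis by simp
  qed
  have "3 dvd card (S - ?F)"
  proof (rule card_dvd_3_if_fixed_point_free_order_3)
    show "f ` (S - ?F) \<subseteq> S - ?F" using invariant by blast
  qed (use fin cube in auto)
  then obtain k where k: "card (S - ?F) = 3 * k" by blast
  have "card S = card ?F + card (S - ?F)"
    using card_Diff_subset[of ?F S] card_mono[of S ?F] fin by fastforce
  then show ?thesis using k by simp
qed

(* If g \<circ> h = k \<circ> f on T with h injective on T and k a permutation of B, then g is a bijection
   from h ` T onto B exactly when f is a bijection from T onto B.  This is how a cell map
   transports the row, column and symbol bijections of a transversal. *)
lemma bij_betw_image_transfer:
  assumes h: "inj_on h T" and k: "bij_betw k B B" and f: "f ` T \<subseteq> B"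
    and commute: "\<And>c. c \<in> T \<Longrightarrow> g (h c) = k (f c)"
  shows "bij_betw g (h ` T) B \<longleftrightarrow> bij_betw f T B"
proof -
  have "bij_betw g (h ` T) B \<longleftrightarrow> bij_betw (g \<circ> h) T B"
    by (rule bij_betw_comp_iff[OF inj_on_imp_bij_betw[OF h]])
  also have "\<dots> \<longleftrightarrow> bij_betw (k \<circ> f) T B"
    by (rule bij_betw_cong) (simp add: commute)
  also have "\<dots> \<longleftrightarrow> bij_betw f T B"
    by (rule bij_betw_comp_iff2[OF k f, symmetric])
  finally show ?thesis .
qed

lemma unique_row_iff_bij_fst:
  assumes "T \<subseteq> A \<times> B"
  shows "(\<forall>x\<in>A. \<exists>!y. (x, y) \<in> T) \<longleftrightarrow> bij_betw fst T A"
  using assms unfolding bij_betw_def inj_on_def by force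

lemma unique_column_iff_bij_snd:
  assumes "T \<subseteq> A \<times> B"
  shows "(\<forall>y\<in>B. \<exists>!x. (x, y) \<in> T) \<longleftrightarrow> bij_betw snd T B"
  using assms unfolding bij_betw_def inj_on_def by force

lemma transversal_cells: "cayley_transversal G T \<Longrightarrow> T \<subseteq> carrier G \<times> carrier G"
  by (simp add: cayley_transversal_def)

lemma transversal_row: "cayley_transversal G T \<Longrightarrow> x \<in> carrier G \<Longrightarrow> \<exists>!y. (x, y) \<in> T"
  by (simp add: cayley_transversal_def)

context group
begin

(* If x\<^sup>k = 1 and k is coprime to the group order, then x = 1, since ord x divides both. *)
lemma pow_eq_one_coprime:
  assumes x: "x \<in> carrier G" and coprime: "coprime k (order G)" and pow: "x [^] k = \<one>"
  shows "x = \<one>"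
proof -
  have "ord x dvd k" using x pow pow_eq_id by blast
  moreover have "ord x dvd order G" using x ord_dvd_group_order by blast
  ultimately have "ord x = 1" using coprime coprime_common_divisor by fastforce
  then show ?thesis using x ord_eq_1 by blast
qed

lemma inv_bij: "bij_betw (\<lambda>x. inv x) (carrier G) (carrier G)"
  by (rule bij_betwI[where g = "\<lambda>x. inv x"]) auto

lemma mult_right_bij: "a \<in> carrier G \<Longrightarrow> bij_betw (\<lambda>y. y \<otimes> a) (carrier G) (carrier G)"
  by (rule bij_betwI[where g = "\<lambda>y. y \<otimes> inv a"]) (auto simp: m_assoc)

(* The symbol map is only required to be injective in the definition; finiteness upgrades this
   to a bijection. *)
lemma transversal_iff_bij:
  assumes fin: "finite (carrier G)"
  shows "cayley_transversal G T \<longleftrightarrow> T \<subseteq> carrier G \<times> carrier G \<and>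
    bij_betw fst T (carrier G) \<and> bij_betw snd T (carrier G) \<and>
    bij_betw (\<lambda>(x, y). x \<otimes> y) T (carrier G)"
proof
  assume T: "cayley_transversal G T"
  then have sub: "T \<subseteq> carrier G \<times> carrier G"
    and rows: "bij_betw fst T (carrier G)" and cols: "bij_betw snd T (carrier G)"
    and inj: "inj_on (\<lambda>(x, y). x \<otimes> y) T"
    unfolding cayley_transversal_def
    using unique_row_iff_bij_fst[of T] unique_column_iff_bij_snd[of T] by auto
  have "(\<lambda>(x, y). x \<otimes> y) ` T \<subseteq> carrier G" using sub by auto
  moreover have "card ((\<lambda>(x, y). x \<otimes> y) ` T) = card (carrier G)"
    using card_image[OF inj] bij_betw_same_card[OF rows] by simp
  ultimately have "(\<lambda>(x, y). x \<otimes> y) ` T = carrier G"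
    using fin by (simp add: card_subset_eq)
  then show "T \<subseteq> carrier G \<times> carrier G \<and> bij_betw fst T (carrier G) \<and>
    bij_betw snd T (carrier G) \<and> bij_betw (\<lambda>(x, y). x \<otimes> y) T (carrier G)"
    using sub rows cols inj by (simp add: bij_betw_def)
next
  assume "T \<subseteq> carrier G \<times> carrier G \<and> bij_betw fst T (carrier G) \<and>
    bij_betw snd T (carrier G) \<and> bij_betw (\<lambda>(x, y). x \<otimes> y) T (carrier G)"
  then have sub: "T \<subseteq> carrier G \<times> carrier G" and rows: "bij_betw fst T (carrier G)"
    and cols: "bij_betw snd T (carrier G)" and prod: "bij_betw (\<lambda>(x, y). x \<otimes> y) T (carrier G)"
    by auto
  then show "cayley_transversal G T"
    unfolding cayley_transversal_def
    by (simp add: unique_row_iff_bij_fst[OF sub] unique_column_iff_bij_snd[OF sub]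
        bij_betw_imp_inj_on)
qed

lemma finite_transversals: "finite (carrier G) \<Longrightarrow> finite {T. cayley_transversal G T}"
  by (rule finite_subset[of _ "Pow (carrier G \<times> carrier G)"]) (auto dest: transversal_cells)

end

definition shift_cell :: "('a, 'b) monoid_scheme \<Rightarrow> 'a \<Rightarrow> 'a \<times> 'a \<Rightarrow> 'a \<times> 'a" where
  "shift_cell G a = (\<lambda>(x, y). (x, y \<otimes>\<^bsub>G\<^esub> a))"

definition transversals_through :: "('a, 'b) monoid_scheme \<Rightarrow> 'a \<Rightarrow> ('a \<times> 'a) set set" where
  "transversals_through G y = {T. cayley_transversal G T \<and> (\<one>\<^bsub>G\<^esub>, y) \<in> T}"

context group
begin

lemma inj_on_shift_cell:
  assumes "a \<in> carrier G"
  shows "inj_on (shift_cell G a) (carrier G \<times> carrier G)"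
  using assms by (auto intro!: inj_onI simp: shift_cell_def)

(* Shifting leaves rows alone and multiplies columns and symbols on the right by a. *)
lemma transversal_shift_cell:
  assumes fin: "finite (carrier G)" and T: "cayley_transversal G T" and a: "a \<in> carrier G"
  shows "cayley_transversal G (shift_cell G a ` T)"
proof -
  let ?prod = "\<lambda>(x, y). x \<otimes> y"
  have sub: "T \<subseteq> carrier G \<times> carrier G" and rows: "bij_betw fst T (carrier G)"
    and cols: "bij_betw snd T (carrier G)" and prod: "bij_betw ?prod T (carrier G)"
    using T transversal_iff_bij[OF fin] by auto
  have inj: "inj_on (shift_cell G a) T" by (rule inj_on_subset[OF inj_on_shift_cell[OF a] sub])
  have "bij_betw fst (shift_cell G a ` T) (carrier G) \<longleftrightarrow> bij_betw fst T (carrier G)"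
    by (rule bij_betw_image_transfer[OF inj bij_betw_id]) (use sub in \<open>auto simp: shift_cell_def\<close>)
  moreover have "bij_betw snd (shift_cell G a ` T) (carrier G) \<longleftrightarrow> bij_betw snd T (carrier G)"
    by (rule bij_betw_image_transfer[OF inj mult_right_bij[OF a]])
      (use sub in \<open>auto simp: shift_cell_def\<close>)
  moreover have "bij_betw ?prod (shift_cell G a ` T) (carrier G) \<longleftrightarrow> bij_betw ?prod T (carrier G)"
    by (rule bij_betw_image_transfer[OF inj mult_right_bij[OF a]])
      (use sub a in \<open>auto simp: shift_cell_def m_assoc\<close>)
  moreover have "shift_cell G a ` T \<subseteq> carrier G \<times> carrier G"
    using sub a by (auto simp: shift_cell_def)
  ultimately show ?thesis using transversal_iff_bij[OF fin] rows cols prod by blast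
qed

(* Shifting by y\<inverse> z maps the transversals through (1, y) injectively into those through
   (1, z). *)
lemma card_transversals_through_le:
  assumes fin: "finite (carrier G)" and y: "y \<in> carrier G" and z: "z \<in> carrier G"
  shows "card (transversals_through G y) \<le> card (transversals_through G z)"
proof (rule card_inj_on_le)
  let ?a = "inv y \<otimes> z"
  have a: "?a \<in> carrier G" using y z by simp
  show "image (shift_cell G ?a) ` transversals_through G y \<subseteq> transversals_through G z"
  proof
    fix U assume "U \<in> image (shift_cell G ?a) ` transversals_through G y"
    then obtain T where T: "cayley_transversal G T" "(\<one>, y) \<in> T"
      and U: "U = shift_cell G ?a ` T"
      by (auto simp: transversals_through_def)
    have "shift_cell G ?a (\<one>, y) = (\<one>, z)"
      using y z by (simp add: shift_cell_def m_assoc[symmetric])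
    then have "(\<one>, z) \<in> U" using T(2) U by (metis image_eqI)
    then show "U \<in> transversals_through G z"
      using transversal_shift_cell[OF fin T(1) a] U by (simp add: transversals_through_def)
  qed
  show "inj_on (image (shift_cell G ?a)) (transversals_through G y)"
    by (rule inj_on_subset[OF inj_on_image_Pow[OF inj_on_shift_cell[OF a]]])
      (auto simp: transversals_through_def dest: transversal_cells)
  show "finite (transversals_through G z)"
    by (rule finite_subset[OF _ finite_transversals[OF fin]])
      (auto simp: transversals_through_def)
qed

(* Every transversal passes through exactly one cell (1, y), and all these classes have the
   same size. *)
lemma order_dvd_num_transversals:
  assumes fin: "finite (carrier G)"
  shows "card (carrier G) dvd num_transversals G"
proof -
  have partition: "{T. cayley_transversal G T} = (\<Union>y\<in>carrier G. transversals_through G y)"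
  proof (intro equalityI subsetI)
    fix T assume "T \<in> {T. cayley_transversal G T}"
    then have T: "cayley_transversal G T" by simp
    obtain y where y: "(\<one>, y) \<in> T" using transversal_row[OF T one_closed] by blast
    then have "y \<in> carrier G" using transversal_cells[OF T] by blast
    with T y show "T \<in> (\<Union>y\<in>carrier G. transversals_through G y)"
      by (auto simp: transversals_through_def)
  qed (auto simp: transversals_through_def)
  have disjoint: "transversals_through G y \<inter> transversals_through G z = {}"
    if "y \<noteq> z" for y z
  proof (intro equalityI subsetI)
    fix T assume "T \<in> transversals_through G y \<inter> transversals_through G z"
    then have T: "cayley_transversal G T" and "(\<one>, y) \<in> T" "(\<one>, z) \<in> T"
      by (auto simp: transversals_through_def)
    then have "y = z" using transversal_row[OF T one_closed] by blast
    then show "T \<in> {}" using that by simp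
  qed simp
  have equal: "card (transversals_through G y) = card (transversals_through G \<one>)"
    if "y \<in> carrier G" for y
    using card_transversals_through_le[OF fin] that by (meson le_antisym one_closed)
  have "num_transversals G = (\<Sum>y\<in>carrier G. card (transversals_through G y))"
    unfolding num_transversals_def partition
  proof (rule card_UN_disjoint[OF fin])
    show "\<forall>y\<in>carrier G. finite (transversals_through G y)"
      using finite_subset[OF _ finite_transversals[OF fin]]
      by (simp add: transversals_through_def)
    show "\<forall>y\<in>carrier G. \<forall>z\<in>carrier G. y \<noteq> z \<longrightarrow>
        transversals_through G y \<inter> transversals_through G z = {}"
      using disjoint by blast
  qed
  also have "\<dots> = (\<Sum>y\<in>carrier G. card (transversals_through G \<one>))"
    by (rule sum.cong[OF refl]) (rule equal)
  also have "\<dots> = card (carrier G) * card (transversals_through G \<one>)"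
    by simp
  finally show ?thesis by simp
qed

end

(* The cell (x, y) corresponds to the triple (x, y, (x y)\<inverse>) with product 1; rotating the
   triple gives the cell (y, (x y)\<inverse>). *)
definition rotate_cell :: "('a, 'b) monoid_scheme \<Rightarrow> 'a \<times> 'a \<Rightarrow> 'a \<times> 'a" where
  "rotate_cell G = (\<lambda>(x, y). (y, inv\<^bsub>G\<^esub> (x \<otimes>\<^bsub>G\<^esub> y)))"

context group
begin

lemma rotate_cell_closed:
  "c \<in> carrier G \<times> carrier G \<Longrightarrow> rotate_cell G c \<in> carrier G \<times> carrier G"
  by (auto simp: rotate_cell_def)

lemma rotate_cell_cube:
  assumes "c \<in> carrier G \<times> carrier G"
  shows "rotate_cell G (rotate_cell G (rotate_cell G c)) = c"
proof -
  obtain x y where c: "c = (x, y)" and x: "x \<in> carrier G" and y: "y \<in> carrier G"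
    using assms by auto
  have "inv (y \<otimes> inv (x \<otimes> y)) = x" and "inv (inv (x \<otimes> y) \<otimes> x) = y"
    using x y by (simp_all add: inv_mult_group m_assoc)
  then show ?thesis by (simp add: c rotate_cell_def)
qed

lemma inj_on_rotate_cell: "inj_on (rotate_cell G) (carrier G \<times> carrier G)"
  by (rule inj_on_inverseI[where g = "\<lambda>c. rotate_cell G (rotate_cell G c)"])
    (rule rotate_cell_cube)

lemma rotate_cell_image_cube:
  assumes "T \<subseteq> carrier G \<times> carrier G"
  shows "rotate_cell G ` rotate_cell G ` rotate_cell G ` T = T"
proof -
  have "rotate_cell G ` rotate_cell G ` rotate_cell G ` T
      = (\<lambda>c. rotate_cell G (rotate_cell G (rotate_cell G c))) ` T"
    by (simp add: image_image)
  also have "\<dots> = id ` T"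
    by (rule image_cong) (use assms rotate_cell_cube in auto)
  finally show ?thesis by simp
qed

lemma rotate_cell_coordinates:
  assumes "c \<in> carrier G \<times> carrier G"
  shows "fst (rotate_cell G c) = snd c"
    and "snd (rotate_cell G c) = inv ((\<lambda>(x, y). x \<otimes> y) c)"
    and "(\<lambda>(x, y). x \<otimes> y) (rotate_cell G c) = inv (fst c)"
  using assms by (auto simp: rotate_cell_def inv_mult_group m_assoc[symmetric])

lemma transversal_rotate_cell:
  assumes fin: "finite (carrier G)" and T: "cayley_transversal G T"
  shows "cayley_transversal G (rotate_cell G ` T)"
proof -
  let ?prod = "\<lambda>(x, y). x \<otimes> y"
  have sub: "T \<subseteq> carrier G \<times> carrier G" and rows: "bij_betw fst T (carrier G)"
    and cols: "bij_betw snd T (carrier G)" and prod: "bij_betw ?prod T (carrier G)"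
    using T transversal_iff_bij[OF fin] by auto
  have inj: "inj_on (rotate_cell G) T" by (rule inj_on_subset[OF inj_on_rotate_cell sub])
  have "bij_betw fst (rotate_cell G ` T) (carrier G) \<longleftrightarrow> bij_betw snd T (carrier G)"
    by (rule bij_betw_image_transfer[OF inj bij_betw_id])
      (use sub in \<open>auto simp: rotate_cell_coordinates\<close>)
  moreover have "bij_betw snd (rotate_cell G ` T) (carrier G) \<longleftrightarrow> bij_betw ?prod T (carrier G)"
    by (rule bij_betw_image_transfer[OF inj inv_bij])
      (use sub in \<open>auto simp: rotate_cell_coordinates\<close>)
  moreover have "bij_betw ?prod (rotate_cell G ` T) (carrier G) \<longleftrightarrow> bij_betw fst T (carrier G)"
    by (rule bij_betw_image_transfer[OF inj inv_bij])
      (use sub in \<open>auto simp: rotate_cell_coordinates\<close>)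
  moreover have "rotate_cell G ` T \<subseteq> carrier G \<times> carrier G"
    using sub rotate_cell_closed by blast
  ultimately show ?thesis using transversal_iff_bij[OF fin] rows cols prod by blast
qed

lemma rotate_cell_fixed:
  assumes "c \<in> carrier G \<times> carrier G" and "rotate_cell G c = c"
  shows "\<exists>x. c = (x, x) \<and> x [^] (3::nat) = \<one>"
proof -
  obtain x y where c: "c = (x, y)" and x: "x \<in> carrier G" and y: "y \<in> carrier G"
    using assms(1) by auto
  have yx: "y = x" and inv: "inv (x \<otimes> y) = x"
    using assms(2) by (auto simp: c rotate_cell_def)
  have "x [^] (3::nat) = (x \<otimes> x) \<otimes> inv (x \<otimes> x)"
    using inv yx x by (simp add: numeral_3_eq_3 m_assoc)
  then show ?thesis using c yx x by simp
qed

(* If 3 does not divide the order, a rotation-invariant transversal has at most the fixed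
   cell (1, 1), so counting modulo 3 forces the order to be 1 modulo 3. *)
lemma rotation_invariant_transversal:
  assumes fin: "finite (carrier G)" and not3: "\<not> 3 dvd card (carrier G)"
    and T: "cayley_transversal G T" and invariant: "rotate_cell G ` T = T"
  shows "card (carrier G) mod 3 = 1"
proof -
  have sub: "T \<subseteq> carrier G \<times> carrier G" by (rule transversal_cells[OF T])
  have card_T: "card T = card (carrier G)"
    using T transversal_iff_bij[OF fin] bij_betw_same_card by blast
  have fixed: "{c \<in> T. rotate_cell G c = c} \<subseteq> {(\<one>, \<one>)}"
  proof
    fix c assume c: "c \<in> {c \<in> T. rotate_cell G c = c}"
    then obtain x where cx: "c = (x, x)" and cube: "x [^] (3::nat) = \<one>"
      using rotate_cell_fixed sub by blast
    have "coprime 3 (order G)"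
      using not3 unfolding order_def by (rule prime_imp_coprime[rotated]) simp
    then have "x = \<one>" using pow_eq_one_coprime cube cx c sub by blast
    then show "c \<in> {(\<one>, \<one>)}" using cx by simp
  qed
  have "card T mod 3 = card {c \<in> T. rotate_cell G c = c} mod 3"
    using finite_subset[OF sub] fin invariant rotate_cell_cube sub
    by (intro card_mod_3_eq_fixed_points) auto
  moreover have "card {c \<in> T. rotate_cell G c = c} \<le> 1"
    using card_mono[OF _ fixed] by simp
  ultimately show ?thesis using not3 card_T by presburger
qed

end

theorem theorem4p7:
  fixes G :: "('a, 'b) monoid_scheme"
  assumes "group G" and "finite (carrier G)"
    and "card (carrier G) mod 3 \<noteq> 1"
  shows "3 dvd num_transversals G"
proof -
  interpret group G by (rule assms(1))
  show ?thesis
  proof (cases "3 dvd card (carrier G)")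
    case True
    then show ?thesis using order_dvd_num_transversals[OF assms(2)] by (rule dvd_trans)
  next
    case False
    let ?S = "{T. cayley_transversal G T}" and ?rotate = "image (rotate_cell G)"
    have "card ?S mod 3 = card {T \<in> ?S. ?rotate T = T} mod 3"
    proof (rule card_mod_3_eq_fixed_points)
      show "finite ?S" by (rule finite_transversals[OF assms(2)])
      show "?rotate ` ?S \<subseteq> ?S" using transversal_rotate_cell[OF assms(2)] by blast
      show "?rotate (?rotate (?rotate T)) = T" if "T \<in> ?S" for T
        using rotate_cell_image_cube[OF transversal_cells] that by simp
    qed
    also have "{T \<in> ?S. ?rotate T = T} = {}"
      using rotation_invariant_transversal[OF assms(2) False] assms(3) by auto
    finally show ?thesis unfolding num_transversals_def by (simp add: dvd_eq_mod_eq_0)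
  qed
qed

end
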